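(* Let $\psi^\beta$ be a smooth surface tensor field with one contravariant surface index on the dynamic surface $\Sigma_t$. Then $$\left(\dot\nabla\nabla_\alpha-\nabla_\alpha\dot\nabla\right)\psi^\beta=\dot R^\beta_{\ \alpha\gamma}\,\psi^\gamma+C\,B^\gamma_\alpha\,\nabla_\gamma\psi^\beta ,$$ where the temporal curvature tensor is $$\dot R^\beta_{\ \alpha\gamma}=\partial_t\Gamma^\beta_{\alpha\gamma}+R^\beta_{\ \gamma\alpha\delta}V^\delta-\nabla_\alpha\dot\Gamma^\beta_\gamma .$$
   Context: Setting: $\Sigma_t$ is a smooth one-parameter family of 2-dimensional surfaces in Euclidean 3-space, given by a position vector $\mathbf R(S^1,S^2,t)$ in surface coordinates $S^\alpha$ (Greek indices run over $1,2$; repeated indices are summed). Put $\mathbf S_\alpha=\partial_\alpha\mathbf R$, $S_{\alpha\beta}=\mathbf S_\alpha\cdot\mathbf S_\beta$, $S^{\alpha\beta}$ the inverse metric (used to raise and lower surface indices), $\mathbf S^\alpha=S^{\alpha\beta}\mathbf S_\beta$, $\mathbf N$ the unit normal, $\Gamma^\gamma_{\alpha\beta}=\mathbf S^\gamma\cdot\partial_\alpha\mathbf S_\beta$ the surface Christoffel symbols, and $\nabla_\alpha$ the surface covariant derivative. The curvature tensor is $B_{\alpha\beta}=\mathbf N\cdot\nabla_\alpha\mathbf S_\beta$, so that $\nabla_\alpha\mathbf S_\beta=\mathbf N B_{\alpha\beta}$ and $B^\alpha_\beta=-\mathbf S^\alpha\cdot\nabla_\beta\mathbf N$. The Riemann tensor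 is defined by $(\nabla_\alpha\nabla_\beta-\nabla_\beta\nabla_\alpha)\psi^\gamma=R^\gamma_{\ \delta\alpha\beta}\psi^\delta$. Velocity: $\mathbf V=\partial_t\mathbf R$ (at fixed $S^\alpha$), normal velocity $C=\mathbf V\cdot\mathbf N$, tangential components $V^\alpha=\mathbf V\cdot\mathbf S^\alpha$, so $\mathbf V=C\mathbf N+V^\alpha\mathbf S_\alpha$. The Christoffel time symbol is $\dot\Gamma^\alpha_\beta=\nabla_\beta V^\alpha-C B^\alpha_\beta$. The invariant (tensorial) time derivative $\dot\nabla$ is defined on scalars by $\dot\nabla\psi=\partial_t\psi-V^\alpha\nabla_\alpha\psi$, on surface tensors by $\dot\nabla\psi^\alpha=\partial_t\psi^\alpha-V^\gamma\nabla_\gamma\psi^\alpha+\dot\Gamma^\alpha_\gamma\psi^\gamma$, $\dot\nabla\psi_\alpha=\partial_t\psi_\alpha-V^\gamma\nabla_\gamma\psi_\alpha-\dot\Gamma^\gamma_\alpha\psi_\gamma$ (one such term per index for higher rank), and on vector-valued fields in Euclidean space componentwise in Cartesian coordinates in the same way (e.g. $\dot\nabla\mathbf S_\alpha=\partial_t\mathbf S_\alpha-V^\gamma\nabla_\gamma\mathbf S_\alpha-\dot\Gamma^\gamma_\alpha\mathbf S_\gamma$). In the formula for $\dot R$, $\nabla_\alpha\dot\Gamma^\beta_\gamma$ is computed with the covariant derivative rule for an object with one upper and one lower surface index. *)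

theory Defs
  imports "HOL-Analysis.Analysis"
begin

text \<open>
  Surface coordinates are points x :: real^2 (index type 2, the two
  elements of which play the role of the Greek indices 1,2), time is t :: real. The ambient Euclidean space is real^3.
  Tensor components are indexed families: a contravariant surface vector is
  psi :: 2 => real^2 => real => real (psi beta = psi^beta); a mixed tensor T with one
  upper and one lower index is T :: 2 => 2 => ..., with T beta alpha = T^beta_alpha.
\<close>

type_synonym 'a field = "real^2 \<Rightarrow> real \<Rightarrow> 'a"

definition pS :: "2 \<Rightarrow> 'a::real_normed_vector field \<Rightarrow> 'a field" where
  "pS \<alpha> f x t = vector_derivative (\<lambda>h. f (x + h *\<^sub>R axis \<alpha> 1) t) (at 0)"

definition pT :: "'a::real_normed_vector field \<Rightarrow> 'a field" where
  "pT f x t = vector_derivative (\<lambda>s. f x s) (at t)"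

fun iterpd :: "2 option list \<Rightarrow> 'a::real_normed_vector field \<Rightarrow> 'a field" where
  "iterpd [] f = f"
| "iterpd (d # ds) f = (case d of None \<Rightarrow> pT (iterpd ds f) | Some \<alpha> \<Rightarrow> pS \<alpha> (iterpd ds f))"

definition smooth_field_on :: "((real^2) \<times> real) set \<Rightarrow> 'a::real_normed_vector field \<Rightarrow> bool" where
  "smooth_field_on U f \<longleftrightarrow>
     (\<forall>ds. \<forall>p\<in>U. (\<lambda>q. iterpd ds f (fst q) (snd q)) differentiable (at p))"

definition Sv :: "(real^3) field \<Rightarrow> 2 \<Rightarrow> (real^3) field" where
  "Sv R \<alpha> = pS \<alpha> R"

definition metric :: "(real^3) field \<Rightarrow> 2 \<Rightarrow> 2 \<Rightarrow> real field" where
  "metric R \<alpha> \<beta> x t = Sv R \<alpha> x t \<bullet> Sv R \<beta> x t"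

definition invmetric :: "(real^3) field \<Rightarrow> 2 \<Rightarrow> 2 \<Rightarrow> real field" where
  "invmetric R \<alpha> \<beta> x t = matrix_inv (\<chi> i j. metric R i j x t) $ \<alpha> $ \<beta>"

definition Sup :: "(real^3) field \<Rightarrow> 2 \<Rightarrow> (real^3) field" where
  "Sup R \<alpha> x t = (\<Sum>\<beta>\<in>UNIV. invmetric R \<alpha> \<beta> x t *\<^sub>R Sv R \<beta> x t)"

definition normal :: "(real^3) field \<Rightarrow> (real^3) field" where
  "normal R x t = (1 / norm (cross3 (Sv R 1 x t) (Sv R 2 x t))) *\<^sub>R cross3 (Sv R 1 x t) (Sv R 2 x t)"

text \<open>Christoffel symbols: chr R gamma alpha beta = Gamma^gamma_{alpha beta}.\<close>
definition chr :: "(real^3) field \<Rightarrow> 2 \<Rightarrow> 2 \<Rightarrow> 2 \<Rightarrow> real field" where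
  "chr R \<gamma> \<alpha> \<beta> x t = Sup R \<gamma> x t \<bullet> pS \<alpha> (Sv R \<beta>) x t"

text \<open>Covariant derivative of a contravariant vector: covV R psi alpha beta = nabla_alpha psi^beta.\<close>
definition covV :: "(real^3) field \<Rightarrow> (2 \<Rightarrow> real field) \<Rightarrow> 2 \<Rightarrow> 2 \<Rightarrow> real field" where
  "covV R \<psi> \<alpha> \<beta> x t = pS \<alpha> (\<psi> \<beta>) x t + (\<Sum>\<gamma>\<in>UNIV. chr R \<beta> \<alpha> \<gamma> x t * \<psi> \<gamma> x t)"

text \<open>Covariant derivative of a mixed tensor: covM R T gamma beta alpha = nabla_gamma T^beta_alpha.\<close>
definition covM :: "(real^3) field \<Rightarrow> (2 \<Rightarrow> 2 \<Rightarrow> real field) \<Rightarrow> 2 \<Rightarrow> 2 \<Rightarrow> 2 \<Rightarrow> real field" where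
  "covM R T \<gamma> \<beta> \<alpha> x t = pS \<gamma> (T \<beta> \<alpha>) x t
     + (\<Sum>\<delta>\<in>UNIV. chr R \<beta> \<gamma> \<delta> x t * T \<delta> \<alpha> x t)
     - (\<Sum>\<delta>\<in>UNIV. chr R \<delta> \<gamma> \<alpha> x t * T \<beta> \<delta> x t)"

text \<open>Curvature tensor B_{alpha beta} = N . nabla_alpha S_beta, with
  nabla_alpha S_beta = d_alpha S_beta - Gamma^gamma_{alpha beta} S_gamma.\<close>
definition Blow :: "(real^3) field \<Rightarrow> 2 \<Rightarrow> 2 \<Rightarrow> real field" where
  "Blow R \<alpha> \<beta> x t = normal R x t \<bullet>
     (pS \<alpha> (Sv R \<beta>) x t - (\<Sum>\<gamma>\<in>UNIV. chr R \<gamma> \<alpha> \<beta> x t *\<^sub>R Sv R \<gamma> x t))"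

text \<open>Bmix R alpha beta = B^alpha_beta (first index raised).\<close>
definition Bmix :: "(real^3) field \<Rightarrow> 2 \<Rightarrow> 2 \<Rightarrow> real field" where
  "Bmix R \<alpha> \<beta> x t = (\<Sum>\<gamma>\<in>UNIV. invmetric R \<alpha> \<gamma> x t * Blow R \<gamma> \<beta> x t)"

text \<open>Riemann tensor R^gamma_{delta alpha beta}, the tensor with
  (nabla_alpha nabla_beta - nabla_beta nabla_alpha) psi^gamma = R^gamma_{delta alpha beta} psi^delta,
  written out in terms of the Christoffel symbols.\<close>
definition Riem :: "(real^3) field \<Rightarrow> 2 \<Rightarrow> 2 \<Rightarrow> 2 \<Rightarrow> 2 \<Rightarrow> real field" where
  "Riem R \<gamma> \<delta> \<alpha> \<beta> x t =
     pS \<alpha> (chr R \<gamma> \<beta> \<delta>) x t - pS \<beta> (chr R \<gamma> \<alpha> \<delta>) x t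
     + (\<Sum>\<epsilon>\<in>UNIV. chr R \<gamma> \<alpha> \<epsilon> x t * chr R \<epsilon> \<beta> \<delta> x t
                     - chr R \<gamma> \<beta> \<epsilon> x t * chr R \<epsilon> \<alpha> \<delta> x t)"

definition vel :: "(real^3) field \<Rightarrow> (real^3) field" where
  "vel R = pT R"

definition Cn :: "(real^3) field \<Rightarrow> real field" where
  "Cn R x t = vel R x t \<bullet> normal R x t"

definition Vt :: "(real^3) field \<Rightarrow> 2 \<Rightarrow> real field" where
  "Vt R \<alpha> x t = vel R x t \<bullet> Sup R \<alpha> x t"

text \<open>Christoffel time symbol: Gdot R alpha beta = dot Gamma^alpha_beta = nabla_beta V^alpha - C B^alpha_beta.\<close>
definition Gdot :: "(real^3) field \<Rightarrow> 2 \<Rightarrow> 2 \<Rightarrow> real field" where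
  "Gdot R \<alpha> \<beta> x t = covV R (Vt R) \<beta> \<alpha> x t - Cn R x t * Bmix R \<alpha> \<beta> x t"

definition tdV :: "(real^3) field \<Rightarrow> (2 \<Rightarrow> real field) \<Rightarrow> 2 \<Rightarrow> real field" where
  "tdV R \<psi> \<alpha> x t = pT (\<psi> \<alpha>) x t
     - (\<Sum>\<gamma>\<in>UNIV. Vt R \<gamma> x t * covV R \<psi> \<gamma> \<alpha> x t)
     + (\<Sum>\<gamma>\<in>UNIV. Gdot R \<alpha> \<gamma> x t * \<psi> \<gamma> x t)"

definition tdM :: "(real^3) field \<Rightarrow> (2 \<Rightarrow> 2 \<Rightarrow> real field) \<Rightarrow> 2 \<Rightarrow> 2 \<Rightarrow> real field" where
  "tdM R T \<beta> \<alpha> x t = pT (T \<beta> \<alpha>) x t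
     - (\<Sum>\<gamma>\<in>UNIV. Vt R \<gamma> x t * covM R T \<gamma> \<beta> \<alpha> x t)
     + (\<Sum>\<gamma>\<in>UNIV. Gdot R \<beta> \<gamma> x t * T \<gamma> \<alpha> x t)
     - (\<Sum>\<gamma>\<in>UNIV. Gdot R \<gamma> \<alpha> x t * T \<beta> \<gamma> x t)"

text \<open>Temporal curvature tensor Rdot R beta alpha gamma = dot R^beta_{alpha gamma}
  = d_t Gamma^beta_{alpha gamma} + R^beta_{gamma alpha delta} V^delta - nabla_alpha dot Gamma^beta_gamma.\<close>
definition Rdot :: "(real^3) field \<Rightarrow> 2 \<Rightarrow> 2 \<Rightarrow> 2 \<Rightarrow> real field" where
  "Rdot R \<beta> \<alpha> \<gamma> x t = pT (chr R \<beta> \<alpha> \<gamma>) x t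
     + (\<Sum>\<delta>\<in>UNIV. Riem R \<beta> \<gamma> \<alpha> \<delta> x t * Vt R \<delta> x t)
     - covM R (Gdot R) \<alpha> \<beta> \<gamma> x t"

end

theory Submission
  imports Defs
begin

text \<open>
  Expanding both sides with the product rule expresses them through the first and second partial
  derivatives of \<open>\<psi>\<close>, the Christoffel symbols and the velocity components. The resulting
  expressions coincide as soon as the mixed partial derivatives of \<open>\<psi>\<close> commute and the
  Christoffel symbols are symmetric, which is the symmetry of second derivatives of \<open>R\<close>; both are
  instances of Schwarz's theorem. To apply the product rule to the geometric quantities one needs
  them to be smooth, which follows from closure of smoothness under the algebraic operations
  they are built from: sums, bilinear products, the inverse of the 2\<times>2 metric (via
  Cayley-Hamilton) and the normalisation of the normal vector.
\<close>

fun pd_dir :: "2 option \<Rightarrow> (real^2) \<times> real" where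
  "pd_dir None = (0, 1)"
| "pd_dir (Some \<alpha>) = (axis \<alpha> 1, 0)"

lemma has_vector_derivative_along_line:
  assumes "(F has_derivative D) (at (p + s *\<^sub>R v))"
  shows "((\<lambda>h. F (p + h *\<^sub>R v)) has_vector_derivative D v) (at s)"
proof -
  have "((\<lambda>h. p + h *\<^sub>R v) has_derivative (\<lambda>h. h *\<^sub>R v)) (at s)"
    by (auto intro!: derivative_eq_intros)
  then have "((\<lambda>h. F (p + h *\<^sub>R v)) has_derivative (\<lambda>h. D (h *\<^sub>R v))) (at s)"
    using assms by (rule has_derivative_compose)
  then show ?thesis
    using linear_scale[OF has_derivative_linear[OF assms]] by (simp add: has_vector_derivative_def)
qed

lemma vector_derivative_along_line_cong:
  fixes p v :: "'a::real_normed_vector"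
  assumes "open U" "p + s *\<^sub>R v \<in> U" "\<And>q. q \<in> U \<Longrightarrow> F q = G q"
  shows "vector_derivative (\<lambda>h. F (p + h *\<^sub>R v)) (at s)
       = vector_derivative (\<lambda>h. G (p + h *\<^sub>R v)) (at s)"
proof (rule vector_derivative_cong_eq)
  have "open ((\<lambda>h. p + h *\<^sub>R v) -` U)"
    by (intro open_vimage assms(1) continuous_intros)
  then have "eventually (\<lambda>h. p + h *\<^sub>R v \<in> U) (nhds s)"
    using assms(2) unfolding eventually_nhds by blast
  then show "eventually (\<lambda>h. h \<in> UNIV \<longrightarrow> F (p + h *\<^sub>R v) = G (p + h *\<^sub>R v)) (nhds s)"
    by eventually_elim (simp add: assms(3))
qed auto

lemma iterpd_single_eq:
  assumes "(case_prod f has_derivative D) (at (x, t))"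
  shows "iterpd [d] f x t = D (pd_dir d)"
proof (cases d)
  case None
  have "((\<lambda>s. f x s) has_vector_derivative D (0, 1)) (at t)"
    using has_vector_derivative_along_line[of "case_prod f" D "(x, 0)" t "(0, 1)"] assms by simp
  then show ?thesis using None by (simp add: pT_def vector_derivative_at)
next
  case (Some \<alpha>)
  have "((\<lambda>h. f (x + h *\<^sub>R axis \<alpha> 1) t) has_vector_derivative D (axis \<alpha> 1, 0)) (at 0)"
    using has_vector_derivative_along_line[of "case_prod f" D "(x, t)" 0 "(axis \<alpha> 1, 0)"] assms by simp
  then show ?thesis using Some by (simp add: pS_def vector_derivative_at)
qed

lemma iterpd_single_frechet:
  "case_prod f differentiable (at (x, t)) \<Longrightarrow>
    iterpd [d] f x t = frechet_derivative (case_prod f) (at (x, t)) (pd_dir d)"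
  by (rule iterpd_single_eq) (rule frechet_derivative_works[THEN iffD1])

lemma iterpd_single_cong:
  assumes "open U" "(x, t) \<in> U" "\<And>y s. (y, s) \<in> U \<Longrightarrow> f y s = g y s"
  shows "iterpd [d] f x t = iterpd [d] g x t"
proof (cases d)
  case None
  have "vector_derivative (\<lambda>s. case_prod f ((x, 0) + s *\<^sub>R (0, 1))) (at t)
      = vector_derivative (\<lambda>s. case_prod g ((x, 0) + s *\<^sub>R (0, 1))) (at t)"
    by (rule vector_derivative_along_line_cong) (use assms in auto)
  then show ?thesis using None by (simp add: pT_def)
next
  case (Some \<alpha>)
  have "vector_derivative (\<lambda>h. case_prod f ((x, t) + h *\<^sub>R (axis \<alpha> 1, 0))) (at 0)
      = vector_derivative (\<lambda>h. case_prod g ((x, t) + h *\<^sub>R (axis \<alpha> 1, 0))) (at 0)"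
    by (rule vector_derivative_along_line_cong) (use assms in auto)
  then show ?thesis using Some by (simp add: pS_def)
qed

lemma iterpd_single_add:
  assumes "case_prod f differentiable (at (x, t))" "case_prod g differentiable (at (x, t))"
  shows "iterpd [d] (\<lambda>x t. f x t + g x t) x t = iterpd [d] f x t + iterpd [d] g x t"
    and "case_prod (\<lambda>x t. f x t + g x t) differentiable (at (x, t))"
proof -
  obtain F G where F: "(case_prod f has_derivative F) (at (x, t))"
    and G: "(case_prod g has_derivative G) (at (x, t))"
    using assms unfolding differentiable_def by blast
  have D: "(case_prod (\<lambda>x t. f x t + g x t) has_derivative (\<lambda>h. F h + G h)) (at (x, t))"
    using has_derivative_add[OF F G] by (simp add: case_prod_beta')
  show "iterpd [d] (\<lambda>x t. f x t + g x t) x t = iterpd [d] f x t + iterpd [d] g x t"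
    using iterpd_single_eq[OF D] iterpd_single_eq[OF F] iterpd_single_eq[OF G] by simp
  show "case_prod (\<lambda>x t. f x t + g x t) differentiable (at (x, t))"
    using D unfolding differentiable_def by blast
qed

lemma iterpd_single_diff:
  assumes "case_prod f differentiable (at (x, t))" "case_prod g differentiable (at (x, t))"
  shows "iterpd [d] (\<lambda>x t. f x t - g x t) x t = iterpd [d] f x t - iterpd [d] g x t"
    and "case_prod (\<lambda>x t. f x t - g x t) differentiable (at (x, t))"
proof -
  obtain F G where F: "(case_prod f has_derivative F) (at (x, t))"
    and G: "(case_prod g has_derivative G) (at (x, t))"
    using assms unfolding differentiable_def by blast
  have D: "(case_prod (\<lambda>x t. f x t - g x t) has_derivative (\<lambda>h. F h - G h)) (at (x, t))"
    using has_derivative_diff[OF F G] by (simp add: case_prod_beta')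
  show "iterpd [d] (\<lambda>x t. f x t - g x t) x t = iterpd [d] f x t - iterpd [d] g x t"
    using iterpd_single_eq[OF D] iterpd_single_eq[OF F] iterpd_single_eq[OF G] by simp
  show "case_prod (\<lambda>x t. f x t - g x t) differentiable (at (x, t))"
    using D unfolding differentiable_def by blast
qed

lemma iterpd_single_bilinear:
  assumes "bounded_bilinear bil"
    and "case_prod f differentiable (at (x, t))" "case_prod g differentiable (at (x, t))"
  shows "iterpd [d] (\<lambda>x t. bil (f x t) (g x t)) x t
           = bil (f x t) (iterpd [d] g x t) + bil (iterpd [d] f x t) (g x t)"
    and "case_prod (\<lambda>x t. bil (f x t) (g x t)) differentiable (at (x, t))"
proof -
  obtain F G where F: "(case_prod f has_derivative F) (at (x, t))"
    and G: "(case_prod g has_derivative G) (at (x, t))"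
    using assms(2,3) unfolding differentiable_def by blast
  have D: "(case_prod (\<lambda>x t. bil (f x t) (g x t))
             has_derivative (\<lambda>h. bil (f x t) (G h) + bil (F h) (g x t))) (at (x, t))"
    using bounded_bilinear.FDERIV[OF assms(1) F G] by (simp add: case_prod_beta')
  show "iterpd [d] (\<lambda>x t. bil (f x t) (g x t)) x t
          = bil (f x t) (iterpd [d] g x t) + bil (iterpd [d] f x t) (g x t)"
    using iterpd_single_eq[OF D] iterpd_single_eq[OF F] iterpd_single_eq[OF G] by simp
  show "case_prod (\<lambda>x t. bil (f x t) (g x t)) differentiable (at (x, t))"
    using D unfolding differentiable_def by blast
qed

lemma iterpd_single_inverse:
  fixes f :: "real field"
  assumes "case_prod f differentiable (at (x, t))" "f x t \<noteq> 0"
  shows "iterpd [d] (\<lambda>x t. inverse (f x t)) x t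
           = - (inverse (f x t) * inverse (f x t)) * iterpd [d] f x t"
    and "case_prod (\<lambda>x t. inverse (f x t)) differentiable (at (x, t))"
proof -
  obtain F where F: "(case_prod f has_derivative F) (at (x, t))"
    using assms(1) unfolding differentiable_def by blast
  have D: "(case_prod (\<lambda>x t. inverse (f x t))
             has_derivative (\<lambda>h. - (inverse (f x t) * F h * inverse (f x t)))) (at (x, t))"
    using Deriv.has_derivative_inverse[OF _ F] assms(2) by (simp add: case_prod_beta')
  show "iterpd [d] (\<lambda>x t. inverse (f x t)) x t
          = - (inverse (f x t) * inverse (f x t)) * iterpd [d] f x t"
    using iterpd_single_eq[OF D] iterpd_single_eq[OF F] by simp
  show "case_prod (\<lambda>x t. inverse (f x t)) differentiable (at (x, t))"
    using D unfolding differentiable_def by blast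
qed

lemma iterpd_single_sqrt:
  fixes f :: "real field"
  assumes "case_prod f differentiable (at (x, t))" "f x t > 0"
  shows "iterpd [d] (\<lambda>x t. sqrt (f x t)) x t = iterpd [d] f x t * inverse (2 * sqrt (f x t))"
    and "case_prod (\<lambda>x t. sqrt (f x t)) differentiable (at (x, t))"
proof -
  obtain F where F: "(case_prod f has_derivative F) (at (x, t))"
    using assms(1) unfolding differentiable_def by blast
  have D: "(case_prod (\<lambda>x t. sqrt (f x t))
             has_derivative (\<lambda>h. F h * (inverse (sqrt (f x t)) / 2))) (at (x, t))"
    using has_derivative_real_sqrt[OF _ F] assms(2) by (simp add: case_prod_beta')
  show "iterpd [d] (\<lambda>x t. sqrt (f x t)) x t = iterpd [d] f x t * inverse (2 * sqrt (f x t))"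
    using iterpd_single_eq[OF D] iterpd_single_eq[OF F] by simp
  show "case_prod (\<lambda>x t. sqrt (f x t)) differentiable (at (x, t))"
    using D unfolding differentiable_def by blast
qed

section \<open>Smoothness\<close>

lemma iterpd_append: "iterpd (ds @ es) f = iterpd ds (iterpd es f)"
  by (induction ds) (auto split: option.split)

definition differentiable_upto ::
    "nat \<Rightarrow> ((real^2) \<times> real) set \<Rightarrow> 'a::real_normed_vector field \<Rightarrow> bool" where
  "differentiable_upto n U f \<longleftrightarrow>
     (\<forall>ds. length ds \<le> n \<longrightarrow> (\<forall>p\<in>U. case_prod (iterpd ds f) differentiable (at p)))"

lemma smooth_field_on_iff_differentiable_upto:
  "smooth_field_on U f \<longleftrightarrow> (\<forall>n. differentiable_upto n U f)"
  unfolding smooth_field_on_def differentiable_upto_def case_prod_beta by auto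

lemma differentiable_upto_0:
  "differentiable_upto 0 U f \<longleftrightarrow> (\<forall>x t. (x, t) \<in> U \<longrightarrow> case_prod f differentiable (at (x, t)))"
  unfolding differentiable_upto_def by auto

lemma differentiable_upto_Suc:
  "differentiable_upto (Suc n) U f \<longleftrightarrow>
     differentiable_upto 0 U f \<and> (\<forall>d. differentiable_upto n U (iterpd [d] f))"
proof
  assume f: "differentiable_upto (Suc n) U f"
  then show "differentiable_upto 0 U f \<and> (\<forall>d. differentiable_upto n U (iterpd [d] f))"
    unfolding differentiable_upto_def
    by (auto simp flip: iterpd_append simp del: iterpd.simps)
next
  assume f: "differentiable_upto 0 U f \<and> (\<forall>d. differentiable_upto n U (iterpd [d] f))"
  show "differentiable_upto (Suc n) U f"
    unfolding differentiable_upto_def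
  proof (intro allI impI)
    fix ds :: "2 option list"
    assume "length ds \<le> Suc n"
    then show "\<forall>p\<in>U. case_prod (iterpd ds f) differentiable (at p)"
      using f by (cases ds rule: rev_cases) (auto simp: differentiable_upto_def iterpd_append)
  qed
qed

lemma differentiable_upto_SucD: "differentiable_upto (Suc n) U f \<Longrightarrow> differentiable_upto n U f"
  unfolding differentiable_upto_def by auto

lemma differentiable_upto_differentiable:
  "differentiable_upto n U f \<Longrightarrow> (x, t) \<in> U \<Longrightarrow> case_prod f differentiable (at (x, t))"
  unfolding differentiable_upto_def by (metis iterpd.simps(1) le0 list.size(3))

lemma differentiable_upto_imp_0: "differentiable_upto n U f \<Longrightarrow> differentiable_upto 0 U f"
  using differentiable_upto_differentiable unfolding differentiable_upto_0 by blast

lemma differentiable_upto_iterpd: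
  "differentiable_upto (Suc n) U f \<Longrightarrow> differentiable_upto n U (iterpd [d] f)"
  using differentiable_upto_Suc by blast

lemma differentiable_transform_within_open:
  assumes "F differentiable (at p)" "open U" "p \<in> U" "\<And>q. q \<in> U \<Longrightarrow> F q = G q"
  shows "G differentiable (at p)"
  using assms has_derivative_transform_within_open unfolding differentiable_def by blast

lemma differentiable_upto_0_cong:
  assumes "open U" "differentiable_upto 0 U f" "\<And>x t. (x, t) \<in> U \<Longrightarrow> f x t = g x t"
  shows "differentiable_upto 0 U g"
  unfolding differentiable_upto_0
proof (intro allI impI)
  fix x t assume p: "(x, t) \<in> U"
  show "case_prod g differentiable (at (x, t))"
  proof (rule differentiable_transform_within_open[OF _ assms(1) p])
    show "case_prod f differentiable (at (x, t))"
      using assms(2) p unfolding differentiable_upto_0 by blast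
    show "case_prod f q = case_prod g q" if "q \<in> U" for q
      using assms(3) that by (cases q) simp
  qed
qed

lemma differentiable_upto_cong:
  assumes "open U" "differentiable_upto n U f" "\<And>x t. (x, t) \<in> U \<Longrightarrow> f x t = g x t"
  shows "differentiable_upto n U g"
  using assms(2,3)
proof (induction n arbitrary: f g)
  case 0
  then show ?case using differentiable_upto_0_cong[OF assms(1)] by blast
next
  case (Suc n)
  have "differentiable_upto 0 U g"
    using Suc.prems differentiable_upto_Suc differentiable_upto_0_cong[OF assms(1)] by blast
  moreover have "differentiable_upto n U (iterpd [d] g)" for d
    using Suc.IH[of "iterpd [d] f" "iterpd [d] g"] Suc.prems differentiable_upto_iterpd
      iterpd_single_cong[OF assms(1)] by blast
  ultimately show ?case using differentiable_upto_Suc by blast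
qed

lemma differentiable_upto_SucI:
  assumes "open U" "differentiable_upto n U h"
    and "\<And>d. differentiable_upto n U (h' d)"
    and "\<And>d x t. (x, t) \<in> U \<Longrightarrow> iterpd [d] h x t = h' d x t"
  shows "differentiable_upto (Suc n) U h"
proof -
  have "differentiable_upto n U (iterpd [d] h)" for d
    using differentiable_upto_cong[OF assms(1) assms(3)] assms(4) by metis
  then show ?thesis
    using differentiable_upto_Suc differentiable_upto_imp_0[OF assms(2)] by blast
qed

lemma differentiable_upto_const: "differentiable_upto n U (\<lambda>x t. c)"
proof -
  have D: "(case_prod (\<lambda>x t. c) has_derivative (\<lambda>h. 0)) (at p)" for c :: 'a and p
    by (simp add: case_prod_beta')
  have "iterpd [d] (\<lambda>x t. c) = (\<lambda>x t. 0)" for c :: 'a and d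
    using iterpd_single_eq[OF D] by (intro ext) blast
  moreover have "differentiable_upto 0 U (\<lambda>x t. c)" for c :: 'a
    using D unfolding differentiable_upto_0 differentiable_def by blast
  ultimately show ?thesis
    by (induction n arbitrary: c) (metis differentiable_upto_Suc)+
qed

context
  fixes U :: "((real^2) \<times> real) set"
  assumes U: "open U"
begin

lemma differentiable_upto_add:
  "differentiable_upto n U f \<Longrightarrow> differentiable_upto n U g \<Longrightarrow>
    differentiable_upto n U (\<lambda>x t. f x t + g x t)"
proof (induction n arbitrary: f g)
  case 0
  then show ?case
    unfolding differentiable_upto_0 using iterpd_single_add(2) by blast
next
  case (Suc n)
  note df = differentiable_upto_differentiable[OF Suc.prems(1)]
    and dg = differentiable_upto_differentiable[OF Suc.prems(2)]
  show ?case
  proof (rule differentiable_upto_SucI[OF U])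
    show "differentiable_upto n U (\<lambda>x t. f x t + g x t)"
      using Suc.IH[OF Suc.prems(1,2)[THEN differentiable_upto_SucD]] .
    show "differentiable_upto n U (\<lambda>x t. iterpd [d] f x t + iterpd [d] g x t)" for d
      using Suc.IH[OF Suc.prems(1,2)[THEN differentiable_upto_iterpd]] .
    show "iterpd [d] (\<lambda>x t. f x t + g x t) x t = iterpd [d] f x t + iterpd [d] g x t"
      if "(x, t) \<in> U" for d x t
      using iterpd_single_add(1)[OF df[OF that] dg[OF that]] .
  qed
qed

lemma differentiable_upto_diff:
  "differentiable_upto n U f \<Longrightarrow> differentiable_upto n U g \<Longrightarrow>
    differentiable_upto n U (\<lambda>x t. f x t - g x t)"
proof (induction n arbitrary: f g)
  case 0
  then show ?case
    unfolding differentiable_upto_0 using iterpd_single_diff(2) by blast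
next
  case (Suc n)
  note df = differentiable_upto_differentiable[OF Suc.prems(1)]
    and dg = differentiable_upto_differentiable[OF Suc.prems(2)]
  show ?case
  proof (rule differentiable_upto_SucI[OF U])
    show "differentiable_upto n U (\<lambda>x t. f x t - g x t)"
      using Suc.IH[OF Suc.prems(1,2)[THEN differentiable_upto_SucD]] .
    show "differentiable_upto n U (\<lambda>x t. iterpd [d] f x t - iterpd [d] g x t)" for d
      using Suc.IH[OF Suc.prems(1,2)[THEN differentiable_upto_iterpd]] .
    show "iterpd [d] (\<lambda>x t. f x t - g x t) x t = iterpd [d] f x t - iterpd [d] g x t"
      if "(x, t) \<in> U" for d x t
      using iterpd_single_diff(1)[OF df[OF that] dg[OF that]] .
  qed
qed

lemma differentiable_upto_bilinear:
  assumes "bounded_bilinear bil"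
  shows "differentiable_upto n U f \<Longrightarrow> differentiable_upto n U g \<Longrightarrow>
    differentiable_upto n U (\<lambda>x t. bil (f x t) (g x t))"
proof (induction n arbitrary: f g)
  case 0
  then show ?case
    unfolding differentiable_upto_0 using iterpd_single_bilinear(2)[OF assms] by blast
next
  case (Suc n)
  note df = differentiable_upto_differentiable[OF Suc.prems(1)]
    and dg = differentiable_upto_differentiable[OF Suc.prems(2)]
  show ?case
  proof (rule differentiable_upto_SucI[OF U])
    show "differentiable_upto n U (\<lambda>x t. bil (f x t) (g x t))"
      using Suc.IH[OF Suc.prems(1,2)[THEN differentiable_upto_SucD]] .
    show "differentiable_upto n U
            (\<lambda>x t. bil (f x t) (iterpd [d] g x t) + bil (iterpd [d] f x t) (g x t))" for d
      using differentiable_upto_add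
          Suc.IH[OF differentiable_upto_SucD[OF Suc.prems(1)] differentiable_upto_iterpd[OF Suc.prems(2)]]
          Suc.IH[OF differentiable_upto_iterpd[OF Suc.prems(1)] differentiable_upto_SucD[OF Suc.prems(2)]] .
    show "iterpd [d] (\<lambda>x t. bil (f x t) (g x t)) x t
            = bil (f x t) (iterpd [d] g x t) + bil (iterpd [d] f x t) (g x t)"
      if "(x, t) \<in> U" for d x t
      using iterpd_single_bilinear(1)[OF assms df[OF that] dg[OF that]] .
  qed
qed

lemma differentiable_upto_mult:
  "differentiable_upto n U f \<Longrightarrow> differentiable_upto n U g \<Longrightarrow>
    differentiable_upto n U (\<lambda>x t. f x t * g x t :: real)"
  using differentiable_upto_bilinear[OF bounded_bilinear_mult] .

lemma differentiable_upto_minus: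
  assumes "differentiable_upto n U f"
  shows "differentiable_upto n U (\<lambda>x t. - f x t)"
  by (rule differentiable_upto_cong[OF U differentiable_upto_diff[OF differentiable_upto_const assms]])
    simp

lemma differentiable_upto_inverse:
  fixes f :: "real field"
  assumes "\<And>x t. (x, t) \<in> U \<Longrightarrow> f x t \<noteq> 0"
  shows "differentiable_upto n U f \<Longrightarrow> differentiable_upto n U (\<lambda>x t. inverse (f x t))"
proof (induction n)
  case 0
  then show ?case
    unfolding differentiable_upto_0 using iterpd_single_inverse(2) assms by blast
next
  case (Suc n)
  note df = differentiable_upto_differentiable[OF Suc.prems]
  have inv: "differentiable_upto n U (\<lambda>x t. inverse (f x t))"
    using Suc.IH[OF differentiable_upto_SucD[OF Suc.prems]] .
  show ?case
  proof (rule differentiable_upto_SucI[OF U inv])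
    show "differentiable_upto n U
            (\<lambda>x t. - (inverse (f x t) * inverse (f x t)) * iterpd [d] f x t)" for d
      using differentiable_upto_mult[OF differentiable_upto_minus[OF differentiable_upto_mult[OF inv inv]]]
        differentiable_upto_iterpd[OF Suc.prems] by blast
    show "iterpd [d] (\<lambda>x t. inverse (f x t)) x t
            = - (inverse (f x t) * inverse (f x t)) * iterpd [d] f x t"
      if "(x, t) \<in> U" for d x t
      using iterpd_single_inverse(1)[OF df[OF that] assms[OF that]] .
  qed
qed

lemma differentiable_upto_sqrt:
  fixes f :: "real field"
  assumes pos: "\<And>x t. (x, t) \<in> U \<Longrightarrow> f x t > 0"
  shows "differentiable_upto n U f \<Longrightarrow> differentiable_upto n U (\<lambda>x t. sqrt (f x t))"
proof (induction n)
  case 0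
  then show ?case
    unfolding differentiable_upto_0 using iterpd_single_sqrt(2) pos by blast
next
  case (Suc n)
  note df = differentiable_upto_differentiable[OF Suc.prems]
  have sq: "differentiable_upto n U (\<lambda>x t. sqrt (f x t))"
    using Suc.IH[OF differentiable_upto_SucD[OF Suc.prems]] .
  have "differentiable_upto n U (\<lambda>x t. inverse (2 * sqrt (f x t)))"
    by (rule differentiable_upto_inverse[OF _ differentiable_upto_mult[OF differentiable_upto_const sq]])
      (use pos in force)
  then show ?case
  proof (intro differentiable_upto_SucI[OF U sq])
    show "differentiable_upto n U (\<lambda>x t. iterpd [d] f x t * inverse (2 * sqrt (f x t)))"
      if "differentiable_upto n U (\<lambda>x t. inverse (2 * sqrt (f x t)))" for d
      using differentiable_upto_mult[OF differentiable_upto_iterpd[OF Suc.prems] that] .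
    show "iterpd [d] (\<lambda>x t. sqrt (f x t)) x t = iterpd [d] f x t * inverse (2 * sqrt (f x t))"
      if "(x, t) \<in> U" for d x t
      using iterpd_single_sqrt(1)[OF df[OF that] pos[OF that]] .
  qed
qed

lemma smooth_field_on_cong:
  "smooth_field_on U f \<Longrightarrow> (\<And>x t. (x, t) \<in> U \<Longrightarrow> f x t = g x t) \<Longrightarrow> smooth_field_on U g"
  unfolding smooth_field_on_iff_differentiable_upto using differentiable_upto_cong[OF U] by blast

lemma smooth_field_on_add:
  "smooth_field_on U f \<Longrightarrow> smooth_field_on U g \<Longrightarrow> smooth_field_on U (\<lambda>x t. f x t + g x t)"
  by (simp add: smooth_field_on_iff_differentiable_upto differentiable_upto_add)

lemma smooth_field_on_diff:
  "smooth_field_on U f \<Longrightarrow> smooth_field_on U g \<Longrightarrow> smooth_field_on U (\<lambda>x t. f x t - g x t)"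
  by (simp add: smooth_field_on_iff_differentiable_upto differentiable_upto_diff)

lemma smooth_field_on_bilinear:
  "bounded_bilinear bil \<Longrightarrow> smooth_field_on U f \<Longrightarrow> smooth_field_on U g \<Longrightarrow>
    smooth_field_on U (\<lambda>x t. bil (f x t) (g x t))"
  by (simp add: smooth_field_on_iff_differentiable_upto differentiable_upto_bilinear)

lemmas smooth_field_on_mult = smooth_field_on_bilinear[OF bounded_bilinear_mult]
lemmas smooth_field_on_scaleR = smooth_field_on_bilinear[OF bounded_bilinear_scaleR]
lemmas smooth_field_on_inner = smooth_field_on_bilinear[OF bounded_bilinear_inner]
lemmas smooth_field_on_cross3 =
  smooth_field_on_bilinear[OF bilinear_cross[unfolded bilinear_conv_bounded_bilinear]]

lemma smooth_field_on_inverse: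
  fixes f :: "real field"
  shows "smooth_field_on U f \<Longrightarrow> (\<And>x t. (x, t) \<in> U \<Longrightarrow> f x t \<noteq> 0) \<Longrightarrow>
    smooth_field_on U (\<lambda>x t. inverse (f x t))"
  by (simp add: smooth_field_on_iff_differentiable_upto differentiable_upto_inverse)

lemma smooth_field_on_sqrt:
  fixes f :: "real field"
  shows "smooth_field_on U f \<Longrightarrow> (\<And>x t. (x, t) \<in> U \<Longrightarrow> f x t > 0) \<Longrightarrow>
    smooth_field_on U (\<lambda>x t. sqrt (f x t))"
  by (simp add: smooth_field_on_iff_differentiable_upto differentiable_upto_sqrt)

lemma smooth_field_on_sum:
  "finite I \<Longrightarrow> (\<And>i. i \<in> I \<Longrightarrow> smooth_field_on U (f i)) \<Longrightarrow>
    smooth_field_on U (\<lambda>x t. \<Sum>i\<in>I. f i x t)"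
proof (induction I rule: finite_induct)
  case empty
  then show ?case by (simp add: smooth_field_on_iff_differentiable_upto differentiable_upto_const)
next
  case (insert i I)
  then show ?case using smooth_field_on_add[of "f i" "\<lambda>x t. \<Sum>i\<in>I. f i x t"] by simp
qed

end

lemma smooth_field_on_const: "smooth_field_on U (\<lambda>x t. c)"
  by (simp add: smooth_field_on_iff_differentiable_upto differentiable_upto_const)

lemma smooth_field_on_pS: "smooth_field_on U f \<Longrightarrow> smooth_field_on U (pS \<alpha> f)"
  using differentiable_upto_iterpd[of _ U f "Some \<alpha>"]
  by (simp add: smooth_field_on_iff_differentiable_upto)

lemma smooth_field_on_pT: "smooth_field_on U f \<Longrightarrow> smooth_field_on U (pT f)"
  using differentiable_upto_iterpd[of _ U f None]
  by (simp add: smooth_field_on_iff_differentiable_upto)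

section \<open>Symmetry of second derivatives\<close>

lemma norm_scaleR_add_scaleR_le:
  fixes u v :: "'a::real_normed_vector"
  assumes "0 \<le> s" "s \<le> h" "0 \<le> k" "k \<le> h"
  shows "norm (s *\<^sub>R u + k *\<^sub>R v) \<le> h * (norm u + norm v)"
proof -
  have "norm (s *\<^sub>R u + k *\<^sub>R v) \<le> s * norm u + k * norm v"
    using norm_triangle_ineq[of "s *\<^sub>R u" "k *\<^sub>R v"] assms by simp
  also have "\<dots> \<le> h * norm u + h * norm v"
    using assms by (intro add_mono mult_right_mono) auto
  finally show ?thesis by (simp add: distrib_left)
qed

lemma second_difference_mean_value:
  fixes g :: "'a::real_normed_vector \<Rightarrow> real"
  assumes G: "\<And>q. q \<in> S \<Longrightarrow> (g has_derivative G q) (at q)"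
    and h: "0 < h"
    and seg: "\<And>s. 0 \<le> s \<Longrightarrow> s \<le> h \<Longrightarrow> p + s *\<^sub>R u + h *\<^sub>R v \<in> S \<and> p + s *\<^sub>R u \<in> S"
  obtains \<xi> where "0 < \<xi>" "\<xi> < h"
    "g (p + h *\<^sub>R u + h *\<^sub>R v) - g (p + h *\<^sub>R u) - g (p + h *\<^sub>R v) + g p
       = h * (G (p + \<xi> *\<^sub>R u + h *\<^sub>R v) u - G (p + \<xi> *\<^sub>R u) u)"
proof -
  define \<phi> where "\<phi> s = g (p + s *\<^sub>R u + h *\<^sub>R v) - g (p + s *\<^sub>R u)" for s
  define \<phi>' where "\<phi>' s = (\<lambda>k. G (p + s *\<^sub>R u + h *\<^sub>R v) (k *\<^sub>R u) - G (p + s *\<^sub>R u) (k *\<^sub>R u))" for s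
  have "(\<phi> has_derivative \<phi>' s) (at s within {0..h})" if "0 \<le> s" "s \<le> h" for s
  proof -
    note inS = seg[OF that]
    have "((\<lambda>s. p + s *\<^sub>R u + h *\<^sub>R v) has_derivative (\<lambda>k. k *\<^sub>R u)) (at s)"
      "((\<lambda>s. p + s *\<^sub>R u) has_derivative (\<lambda>k. k *\<^sub>R u)) (at s)"
      by (auto intro!: derivative_eq_intros)
    note lines = this
    have "((\<lambda>s. g (p + s *\<^sub>R u + h *\<^sub>R v)) has_derivative
            (\<lambda>k. G (p + s *\<^sub>R u + h *\<^sub>R v) (k *\<^sub>R u))) (at s)"
      using has_derivative_compose[OF lines(1) G[OF conjunct1[OF inS]]] .
    moreover have "((\<lambda>s. g (p + s *\<^sub>R u)) has_derivative (\<lambda>k. G (p + s *\<^sub>R u) (k *\<^sub>R u))) (at s)"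
      using has_derivative_compose[OF lines(2) G[OF conjunct2[OF inS]]] .
    ultimately show ?thesis
      unfolding \<phi>_def[abs_def] \<phi>'_def by (rule has_derivative_at_withinI[OF has_derivative_diff])
  qed
  then obtain \<xi> where \<xi>: "\<xi> \<in> {0<..<h}" "\<phi> h - \<phi> 0 = \<phi>' \<xi> (h - 0)"
    using mvt_simple[OF h] by blast
  have "0 \<le> \<xi>" "\<xi> \<le> h"
    using \<xi>(1) by auto
  note inS = seg[OF this]
  have "\<phi>' \<xi> (h - 0) = h * (G (p + \<xi> *\<^sub>R u + h *\<^sub>R v) u - G (p + \<xi> *\<^sub>R u) u)"
    unfolding \<phi>'_def
    using linear_scale[OF has_derivative_linear[OF G[OF conjunct1[OF inS]]]]
      linear_scale[OF has_derivative_linear[OF G[OF conjunct2[OF inS]]]]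
    by (simp add: right_diff_distrib)
  moreover have "\<phi> h - \<phi> 0 = g (p + h *\<^sub>R u + h *\<^sub>R v) - g (p + h *\<^sub>R u) - g (p + h *\<^sub>R v) + g p"
    by (simp add: \<phi>_def)
  ultimately show ?thesis
    using that[of \<xi>] \<xi> by auto
qed

text \<open>
  By the mean value theorem in direction \<open>u\<close>, the second difference over \<open>h\<^sup>2\<close> is the
  difference quotient of \<open>q \<mapsto> G q u\<close> between two points at distance \<open>O(h)\<close> from \<open>p\<close>
  whose difference is \<open>h v\<close>; differentiability of \<open>q \<mapsto> G q u\<close> at \<open>p\<close> makes it tend
  to \<open>Du v\<close>.
\<close>

lemma second_difference_tendsto:
  fixes g :: "'a::real_normed_vector \<Rightarrow> real"
  assumes S: "open S" "p \<in> S"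
    and G: "\<And>q. q \<in> S \<Longrightarrow> (g has_derivative G q) (at q)"
    and Du: "((\<lambda>q. G q u) has_derivative Du) (at p)"
  shows "((\<lambda>h. (g (p + h *\<^sub>R u + h *\<^sub>R v) - g (p + h *\<^sub>R u) - g (p + h *\<^sub>R v) + g p) / h\<^sup>2)
           \<longlongrightarrow> Du v) (at_right 0)"
proof (rule tendstoI)
  fix e :: real assume e: "e > 0"
  define K where "K = norm u + norm v + 1"
  have K: "K > 0" "norm u + norm v \<le> K"
    unfolding K_def by (auto intro: add_nonneg_pos)
  define \<epsilon> where "\<epsilon> = e / (4 * K)"
  have \<epsilon>: "\<epsilon> > 0" "2 * \<epsilon> * K < e"
    using e K unfolding \<epsilon>_def by (auto simp: field_simps)
  obtain d where d: "d > 0"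
    "\<And>q. norm (q - p) < d \<Longrightarrow> norm (G q u - G p u - Du (q - p)) \<le> \<epsilon> * norm (q - p)"
    using Du \<epsilon>(1) unfolding has_derivative_at_alt by blast
  obtain r where r: "r > 0" "ball p r \<subseteq> S"
    using S openE by blast
  have lin: "linear Du"
    using Du has_derivative_linear by blast
  show "eventually (\<lambda>h. dist ((g (p + h *\<^sub>R u + h *\<^sub>R v) - g (p + h *\<^sub>R u) - g (p + h *\<^sub>R v) + g p)
      / h\<^sup>2) (Du v) < e) (at_right 0)"
    unfolding eventually_at_right_field
  proof (intro exI[of _ "min d r / K"] conjI allI impI)
    show "0 < min d r / K"
      using d r K by auto
    fix h :: real assume h: "0 < h" "h < min d r / K"
    have near: "norm (s *\<^sub>R u + k *\<^sub>R v) \<le> h * K" "norm (s *\<^sub>R u + k *\<^sub>R v) < min d r"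
      if "0 \<le> s" "s \<le> h" "0 \<le> k" "k \<le> h" for s k
    proof -
      show le: "norm (s *\<^sub>R u + k *\<^sub>R v) \<le> h * K"
        using norm_scaleR_add_scaleR_le[OF that, where u=u and v=v] mult_left_mono[OF K(2) less_imp_le[OF h(1)]]
        by linarith
      have "h * K < min d r"
        using h K by (simp add: pos_less_divide_eq)
      then show "norm (s *\<^sub>R u + k *\<^sub>R v) < min d r"
        using le by linarith
    qed
    have inS: "p + w \<in> S" if "norm w < r" for w
      using subsetD[OF r(2), of "p + w"] that by (simp add: dist_norm)
    have seg: "p + s *\<^sub>R u + h *\<^sub>R v \<in> S \<and> p + s *\<^sub>R u \<in> S" if "0 \<le> s" "s \<le> h" for s
      using inS near(2)[OF that, of h] near(2)[OF that, of 0] h by (simp add: add.assoc)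
    obtain \<xi> where \<xi>: "0 < \<xi>" "\<xi> < h"
      and \<Delta>: "g (p + h *\<^sub>R u + h *\<^sub>R v) - g (p + h *\<^sub>R u) - g (p + h *\<^sub>R v) + g p
              = h * (G (p + \<xi> *\<^sub>R u + h *\<^sub>R v) u - G (p + \<xi> *\<^sub>R u) u)"
      by (rule second_difference_mean_value[OF G h(1) seg])
    have err: "\<bar>G (p + w) u - G p u - Du w\<bar> \<le> \<epsilon> * (h * K)"
      if "w = s *\<^sub>R u + k *\<^sub>R v" "0 \<le> s" "s \<le> h" "0 \<le> k" "k \<le> h" for w s k
    proof -
      have "\<bar>G (p + w) u - G p u - Du w\<bar> \<le> \<epsilon> * norm w"
        using d(2)[of "p + w"] near(2)[OF that(2-5)] that(1) by simp
      also have "\<dots> \<le> \<epsilon> * (h * K)"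
        using near(1)[OF that(2-5)] that(1) \<epsilon>(1) by (simp add: mult_left_mono)
      finally show ?thesis .
    qed
    have "Du (\<xi> *\<^sub>R u + h *\<^sub>R v) - Du (\<xi> *\<^sub>R u) = h * Du v"
      using lin by (simp add: linear_add linear_scale)
    then have "\<bar>G (p + \<xi> *\<^sub>R u + h *\<^sub>R v) u - G (p + \<xi> *\<^sub>R u) u - h * Du v\<bar> \<le> 2 * \<epsilon> * (h * K)"
      using err[of "\<xi> *\<^sub>R u + h *\<^sub>R v" \<xi> h] err[of "\<xi> *\<^sub>R u" \<xi> 0] \<xi> h(1)
      by (simp add: add.assoc abs_le_iff)
    also have "\<dots> < e * h"
      using \<epsilon>(2) h(1) by simp
    finally have bound: "\<bar>G (p + \<xi> *\<^sub>R u + h *\<^sub>R v) u - G (p + \<xi> *\<^sub>R u) u - h * Du v\<bar> < e * h" .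
    have "h * (G (p + \<xi> *\<^sub>R u + h *\<^sub>R v) u - G (p + \<xi> *\<^sub>R u) u) / h\<^sup>2 - Du v
        = (G (p + \<xi> *\<^sub>R u + h *\<^sub>R v) u - G (p + \<xi> *\<^sub>R u) u - h * Du v) / h"
      using h(1) by (simp add: power2_eq_square field_simps)
    then show "dist ((g (p + h *\<^sub>R u + h *\<^sub>R v) - g (p + h *\<^sub>R u) - g (p + h *\<^sub>R v) + g p)
        / h\<^sup>2) (Du v) < e"
      using bound h(1) unfolding \<Delta> dist_real_def by (simp add: abs_divide pos_divide_less_eq)
  qed
qed

lemma second_derivative_symmetric_real:
  fixes g :: "'a::real_normed_vector \<Rightarrow> real"
  assumes "open S" "p \<in> S"
    and "\<And>q. q \<in> S \<Longrightarrow> (g has_derivative G q) (at q)"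
    and "((\<lambda>q. G q u) has_derivative Du) (at p)"
    and "((\<lambda>q. G q v) has_derivative Dv) (at p)"
  shows "Du v = Dv u"
proof -
  have "((\<lambda>h. (g (p + h *\<^sub>R u + h *\<^sub>R v) - g (p + h *\<^sub>R u) - g (p + h *\<^sub>R v) + g p) / h\<^sup>2)
      \<longlongrightarrow> Dv u) (at_right 0)"
    using second_difference_tendsto[OF assms(1-3,5), of u] by (simp add: algebra_simps)
  with second_difference_tendsto[OF assms(1-4), of v] show ?thesis
    using tendsto_unique[OF trivial_limit_at_right_real] by blast
qed

lemma second_derivative_symmetric:
  fixes g :: "'a::real_normed_vector \<Rightarrow> 'b::real_inner"
  assumes "open S" "p \<in> S"
    and G: "\<And>q. q \<in> S \<Longrightarrow> (g has_derivative G q) (at q)"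
    and Du: "((\<lambda>q. G q u) has_derivative Du) (at p)"
    and Dv: "((\<lambda>q. G q v) has_derivative Dv) (at p)"
  shows "Du v = Dv u"
proof -
  have "Du v \<bullet> c = Dv u \<bullet> c" for c
    using second_derivative_symmetric_real[OF assms(1,2)
        bounded_linear.has_derivative[OF bounded_linear_inner_left G]
        bounded_linear.has_derivative[OF bounded_linear_inner_left Du]
        bounded_linear.has_derivative[OF bounded_linear_inner_left Dv]] .
  then show ?thesis
    by (metis inner_diff_left inner_eq_zero_iff right_minus_eq)
qed

lemma iterpd_commute:
  fixes f :: "'a::real_inner field"
  assumes U: "open U" "(x, t) \<in> U" and f: "differentiable_upto 1 U f"
  shows "iterpd [d] (iterpd [e] f) x t = iterpd [e] (iterpd [d] f) x t"
proof -
  define G where "G q = frechet_derivative (case_prod f) (at q)" for q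
  have G: "(case_prod f has_derivative G q) (at q)" if "q \<in> U" for q
    unfolding G_def using differentiable_upto_differentiable[OF f] that
    by (metis frechet_derivative_works prod.collapse)
  have f': "case_prod (iterpd [d] f) differentiable (at (x, t))" for d
    using differentiable_upto_differentiable[OF differentiable_upto_iterpd[of 0]] f U(2) by simp
  have D: "((\<lambda>q. G q (pd_dir d)) has_derivative frechet_derivative (case_prod (iterpd [d] f)) (at (x, t)))
             (at (x, t))" for d
  proof (rule has_derivative_transform_within_open[OF _ U])
    show "(case_prod (iterpd [d] f) has_derivative frechet_derivative (case_prod (iterpd [d] f)) (at (x, t)))
            (at (x, t))"
      using f' frechet_derivative_works by blast
    show "case_prod (iterpd [d] f) q = G q (pd_dir d)" if "q \<in> U" for q
      using that iterpd_single_eq[OF G] by (cases q) simp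
  qed
  show ?thesis
    using second_derivative_symmetric[OF U G D D] iterpd_single_frechet[OF f'] by simp
qed

lemma matrix_inv_unique:
  fixes A B :: "'a::comm_ring_1^'n^'n"
  assumes "A ** B = mat 1" "B ** A = mat 1"
  shows "matrix_inv A = B"
proof -
  have "A ** matrix_inv A = mat 1 \<and> matrix_inv A ** A = mat 1"
    unfolding matrix_inv_def using someI_ex[of "\<lambda>B. A ** B = mat 1 \<and> B ** A = mat 1"] assms by blast
  then have "matrix_inv A = matrix_inv A ** (A ** B)"
    using assms by simp
  also have "\<dots> = B"
    by (simp add: matrix_mul_assoc \<open>A ** matrix_inv A = mat 1 \<and> matrix_inv A ** A = mat 1\<close>)
  finally show ?thesis .
qed

lemma cayley_hamilton_2x2:
  fixes A :: "'a::comm_ring_1^2^2"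
  shows "A ** (mat (A$1$1 + A$2$2) - A) = mat (det A)"
    and "(mat (A$1$1 + A$2$2) - A) ** A = mat (det A)"
  by (simp_all add: vec_eq_iff forall_2 matrix_matrix_mult_def sum_2 mat_def det_2 algebra_simps)

lemma matrix_inv_2x2:
  fixes A :: "real^2^2"
  assumes "det A \<noteq> 0"
  shows "matrix_inv A = (1 / det A) *\<^sub>R (mat (A$1$1 + A$2$2) - A)"
proof (rule matrix_inv_unique)
  have scale: "(1 / det A) *\<^sub>R mat (det A) = (mat 1 :: real^2^2)"
    using assms by (simp add: vec_eq_iff mat_def)
  show "A ** ((1 / det A) *\<^sub>R (mat (A$1$1 + A$2$2) - A)) = mat 1"
    by (simp add: matrix_scalar_ac scalar_matrix_assoc[symmetric] cayley_hamilton_2x2 scale)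
  show "((1 / det A) *\<^sub>R (mat (A$1$1 + A$2$2) - A)) ** A = mat 1"
    by (simp add: scalar_matrix_assoc[symmetric] cayley_hamilton_2x2 scale)
qed

lemma det_metric_eq_norm_cross3:
  "det (\<chi> i j. metric R i j x t) = (norm (cross3 (Sv R 1 x t) (Sv R 2 x t)))\<^sup>2"
  using norm_cross_dot[of "Sv R 1 x t" "Sv R 2 x t"]
  unfolding power_mult_distrib power2_norm_eq_inner
  by (simp add: det_2 metric_def inner_commute power2_eq_square algebra_simps)

lemma invmetric_eq:
  assumes "det (\<chi> i j. metric R i j x t) \<noteq> 0"
  shows "invmetric R \<alpha> \<beta> x t
    = ((metric R 1 1 x t + metric R 2 2 x t) * (if \<alpha> = \<beta> then 1 else 0) - metric R \<alpha> \<beta> x t)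
        / det (\<chi> i j. metric R i j x t)"
  unfolding invmetric_def matrix_inv_2x2[OF assms] by (simp add: mat_def)

context
  fixes U :: "((real^2) \<times> real) set" and R :: "(real^3) field"
  assumes U: "open U" and R: "smooth_field_on U R"
    and regular: "\<forall>p\<in>U. cross3 (Sv R 1 (fst p) (snd p)) (Sv R 2 (fst p) (snd p)) \<noteq> 0"
begin

lemmas smooth_intros =
  smooth_field_on_add[OF U] smooth_field_on_diff[OF U]
  smooth_field_on_mult[OF U] smooth_field_on_scaleR[OF U] smooth_field_on_inner[OF U]
  smooth_field_on_cross3[OF U] smooth_field_on_sum[OF U finite] smooth_field_on_const
  smooth_field_on_pS smooth_field_on_pT

lemma smooth_Sv: "smooth_field_on U (Sv R \<alpha>)"
  unfolding Sv_def using smooth_field_on_pS[OF R] .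

lemma smooth_metric: "smooth_field_on U (metric R \<alpha> \<beta>)"
  unfolding metric_def[abs_def] by (intro smooth_intros smooth_Sv)

lemma det_metric_pos: "(x, t) \<in> U \<Longrightarrow> det (\<chi> i j. metric R i j x t) > 0"
  using regular unfolding det_metric_eq_norm_cross3 by force

lemma smooth_invmetric: "smooth_field_on U (invmetric R \<alpha> \<beta>)"
proof (rule smooth_field_on_cong[OF U])
  have "smooth_field_on U (\<lambda>x t. det (\<chi> i j. metric R i j x t))"
    unfolding det_2 vec_lambda_beta by (intro smooth_intros smooth_metric)
  then have "smooth_field_on U (\<lambda>x t. inverse (det (\<chi> i j. metric R i j x t)))"
    by (rule smooth_field_on_inverse[OF U]) (use det_metric_pos in force)
  then show "smooth_field_on U (\<lambda>x t. ((metric R 1 1 x t + metric R 2 2 x t) * (if \<alpha> = \<beta> then 1 else 0)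
      - metric R \<alpha> \<beta> x t) * inverse (det (\<chi> i j. metric R i j x t)))"
    by (intro smooth_intros smooth_metric)
  show "((metric R 1 1 x t + metric R 2 2 x t) * (if \<alpha> = \<beta> then 1 else 0) - metric R \<alpha> \<beta> x t)
      * inverse (det (\<chi> i j. metric R i j x t)) = invmetric R \<alpha> \<beta> x t" if "(x, t) \<in> U" for x t
    using invmetric_eq det_metric_pos[OF that] by (simp add: divide_inverse)
qed

lemma smooth_Sup: "smooth_field_on U (Sup R \<alpha>)"
  unfolding Sup_def[abs_def] by (intro smooth_intros smooth_invmetric smooth_Sv)

lemma smooth_normal: "smooth_field_on U (normal R)"
proof -
  let ?c = "\<lambda>x t. cross3 (Sv R 1 x t) (Sv R 2 x t)"
  have c: "smooth_field_on U ?c"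
    by (intro smooth_intros smooth_Sv)
  have pos: "?c x t \<bullet> ?c x t > 0" if "(x, t) \<in> U" for x t
    using regular that by force
  have "smooth_field_on U (\<lambda>x t. sqrt (?c x t \<bullet> ?c x t))"
    by (rule smooth_field_on_sqrt[OF U smooth_field_on_inner[OF U c c] pos])
  then have "smooth_field_on U (\<lambda>x t. inverse (sqrt (?c x t \<bullet> ?c x t)))"
    by (rule smooth_field_on_inverse[OF U]) (use pos in force)
  then have "smooth_field_on U (\<lambda>x t. inverse (sqrt (?c x t \<bullet> ?c x t)) *\<^sub>R ?c x t)"
    using c by (rule smooth_field_on_scaleR[OF U])
  then show ?thesis
    unfolding normal_def[abs_def] by (simp add: norm_eq_sqrt_inner divide_inverse)
qed

lemma smooth_chr: "smooth_field_on U (chr R \<gamma> \<alpha> \<beta>)"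
  unfolding chr_def[abs_def] by (intro smooth_intros smooth_Sup smooth_Sv)

lemma smooth_Bmix: "smooth_field_on U (Bmix R \<alpha> \<beta>)"
  unfolding Bmix_def[abs_def] Blow_def[abs_def]
  by (intro smooth_intros smooth_invmetric smooth_normal smooth_chr smooth_Sv)

lemma smooth_Cn: "smooth_field_on U (Cn R)"
  unfolding Cn_def[abs_def] vel_def by (intro smooth_intros smooth_normal R)

lemma smooth_Vt: "smooth_field_on U (Vt R \<alpha>)"
  unfolding Vt_def[abs_def] vel_def by (intro smooth_intros smooth_Sup R)

lemma smooth_covV: "(\<And>\<gamma>. smooth_field_on U (\<psi> \<gamma>)) \<Longrightarrow> smooth_field_on U (covV R \<psi> \<alpha> \<beta>)"
  unfolding covV_def[abs_def] by (intro smooth_intros smooth_chr)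

lemma smooth_Gdot: "smooth_field_on U (Gdot R \<alpha> \<beta>)"
  unfolding Gdot_def[abs_def] by (intro smooth_intros smooth_covV smooth_Vt smooth_Cn smooth_Bmix)

lemma chr_symmetric: "(x, t) \<in> U \<Longrightarrow> chr R \<gamma> \<alpha> \<beta> x t = chr R \<gamma> \<beta> \<alpha> x t"
  using iterpd_commute[OF U _ R[unfolded smooth_field_on_iff_differentiable_upto, rule_format],
      of x t "Some \<alpha>" "Some \<beta>"]
  by (simp add: chr_def Sv_def)

end

lemma smooth_field_on_differentiable:
  "smooth_field_on U f \<Longrightarrow> (x, t) \<in> U \<Longrightarrow> case_prod f differentiable (at (x, t))"
  unfolding smooth_field_on_iff_differentiable_upto using differentiable_upto_differentiable by blast

lemma iterpd_single_add_smooth: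
  "smooth_field_on U f \<Longrightarrow> smooth_field_on U g \<Longrightarrow> (x, t) \<in> U \<Longrightarrow>
    iterpd [d] (\<lambda>x t. f x t + g x t) x t = iterpd [d] f x t + iterpd [d] g x t"
  using iterpd_single_add(1) smooth_field_on_differentiable by blast

lemma iterpd_single_diff_smooth:
  "smooth_field_on U f \<Longrightarrow> smooth_field_on U g \<Longrightarrow> (x, t) \<in> U \<Longrightarrow>
    iterpd [d] (\<lambda>x t. f x t - g x t) x t = iterpd [d] f x t - iterpd [d] g x t"
  using iterpd_single_diff(1) smooth_field_on_differentiable by blast

lemma iterpd_single_mult_smooth:
  "smooth_field_on U f \<Longrightarrow> smooth_field_on U g \<Longrightarrow> (x, t) \<in> U \<Longrightarrow>
    iterpd [d] (\<lambda>x t. f x t * g x t :: real) x t = f x t * iterpd [d] g x t + iterpd [d] f x t * g x t"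
  using iterpd_single_bilinear(1)[OF bounded_bilinear_mult] smooth_field_on_differentiable by blast

lemma iterpd_single_sum_smooth:
  assumes "open U" "finite I" "\<And>i. i \<in> I \<Longrightarrow> smooth_field_on U (f i)" "(x, t) \<in> U"
  shows "iterpd [d] (\<lambda>x t. \<Sum>i\<in>I. f i x t) x t = (\<Sum>i\<in>I. iterpd [d] (f i) x t)"
  using assms(2,3)
proof (induction I rule: finite_induct)
  case empty
  have "(case_prod (\<lambda>x t. 0) has_derivative (\<lambda>h. 0)) (at (x, t))"
    by (simp add: case_prod_beta')
  then show ?case
    using iterpd_single_eq by simp
next
  case (insert i I)
  have "iterpd [d] (\<lambda>x t. \<Sum>j\<in>insert i I. f j x t) x t
      = iterpd [d] (\<lambda>x t. f i x t + (\<Sum>j\<in>I. f j x t)) x t"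
    using insert.hyps by (simp del: iterpd.simps)
  also have "\<dots> = iterpd [d] (f i) x t + iterpd [d] (\<lambda>x t. \<Sum>j\<in>I. f j x t) x t"
    using insert.prems smooth_field_on_sum[OF assms(1) insert.hyps(1)] assms(4)
    by (intro iterpd_single_add_smooth) auto
  also have "\<dots> = (\<Sum>j\<in>insert i I. iterpd [d] (f j) x t)"
    using insert by (simp del: iterpd.simps)
  finally show ?case .
qed

context
  fixes U :: "((real^2) \<times> real) set" and R :: "(real^3) field" and \<psi> :: "2 \<Rightarrow> real field"
    and x :: "real^2" and t :: real
  assumes U: "open U" and R: "smooth_field_on U R"
    and regular: "\<forall>p\<in>U. cross3 (Sv R 1 (fst p) (snd p)) (Sv R 2 (fst p) (snd p)) \<noteq> 0"
    and \<psi>: "\<And>\<beta>. smooth_field_on U (\<psi> \<beta>)" and xt: "(x, t) \<in> U"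
begin

lemmas smooth_fields =
  \<psi> smooth_chr[OF U R regular] smooth_Vt[OF U R regular] smooth_Gdot[OF U R regular]
  smooth_covV[OF U R regular \<psi>] smooth_field_on_pS smooth_field_on_pT
  smooth_field_on_add[OF U] smooth_field_on_diff[OF U] smooth_field_on_mult[OF U]
  smooth_field_on_sum[OF U finite]

lemmas pS_rules =
  iterpd_single_add_smooth[where d = "Some \<alpha>" for \<alpha>, OF _ _ xt, simplified]
  iterpd_single_diff_smooth[where d = "Some \<alpha>" for \<alpha>, OF _ _ xt, simplified]
  iterpd_single_mult_smooth[where d = "Some \<alpha>" for \<alpha>, OF _ _ xt, simplified]
  iterpd_single_sum_smooth[where d = "Some \<alpha>" for \<alpha>, OF U finite _ xt, simplified]

lemmas pT_rules =
  iterpd_single_add_smooth[where d = None, OF _ _ xt, simplified]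
  iterpd_single_mult_smooth[where d = None, OF _ _ xt, simplified]
  iterpd_single_sum_smooth[where d = None, OF U finite _ xt, simplified]

lemma pT_covV:
  "pT (covV R \<psi> \<alpha> \<beta>) x t = pT (pS \<alpha> (\<psi> \<beta>)) x t
     + (\<Sum>\<gamma>\<in>UNIV. chr R \<beta> \<alpha> \<gamma> x t * pT (\<psi> \<gamma>) x t + pT (chr R \<beta> \<alpha> \<gamma>) x t * \<psi> \<gamma> x t)"
  unfolding covV_def[abs_def] by (simp add: pT_rules smooth_fields)

lemma pS_covV:
  "pS \<alpha> (covV R \<psi> \<gamma> \<beta>) x t = pS \<alpha> (pS \<gamma> (\<psi> \<beta>)) x t
     + (\<Sum>\<delta>\<in>UNIV. chr R \<beta> \<gamma> \<delta> x t * pS \<alpha> (\<psi> \<delta>) x t + pS \<alpha> (chr R \<beta> \<gamma> \<delta>) x t * \<psi> \<delta> x t)"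
  unfolding covV_def[abs_def] by (simp add: pS_rules smooth_fields)

lemma pS_tdV:
  "pS \<alpha> (tdV R \<psi> \<beta>) x t = pS \<alpha> (pT (\<psi> \<beta>)) x t
     - (\<Sum>\<gamma>\<in>UNIV. Vt R \<gamma> x t * pS \<alpha> (covV R \<psi> \<gamma> \<beta>) x t + pS \<alpha> (Vt R \<gamma>) x t * covV R \<psi> \<gamma> \<beta> x t)
     + (\<Sum>\<gamma>\<in>UNIV. Gdot R \<beta> \<gamma> x t * pS \<alpha> (\<psi> \<gamma>) x t + pS \<alpha> (Gdot R \<beta> \<gamma>) x t * \<psi> \<gamma> x t)"
  unfolding tdV_def[abs_def] by (simp add: pS_rules smooth_fields)

lemma pT_pS_commute: "pT (pS \<alpha> (\<psi> \<beta>)) x t = pS \<alpha> (pT (\<psi> \<beta>)) x t"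
  using iterpd_commute[OF U xt \<psi>[unfolded smooth_field_on_iff_differentiable_upto, rule_format],
      of None "Some \<alpha>"] by simp

lemma pS_pS_commute: "pS \<alpha> (pS \<gamma> (\<psi> \<beta>)) x t = pS \<gamma> (pS \<alpha> (\<psi> \<beta>)) x t"
  using iterpd_commute[OF U xt \<psi>[unfolded smooth_field_on_iff_differentiable_upto, rule_format],
      of "Some \<alpha>" "Some \<gamma>"] by simp

lemma tdM_covV_minus_covV_tdV:
  "tdM R (\<lambda>\<beta> \<alpha>. covV R \<psi> \<alpha> \<beta>) \<beta> \<alpha> x t - covV R (tdV R \<psi>) \<alpha> \<beta> x t
     = (\<Sum>\<gamma>\<in>UNIV. Rdot R \<beta> \<alpha> \<gamma> x t * \<psi> \<gamma> x t)
       + Cn R x t * (\<Sum>\<gamma>\<in>UNIV. Bmix R \<gamma> \<alpha> x t * covV R \<psi> \<gamma> \<beta> x t)"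
  by (simp add: tdM_def covM_def Rdot_def Riem_def Gdot_def covV_def tdV_def
        pT_covV pS_covV pS_tdV pT_pS_commute sum_2,
      simp add: pS_pS_commute chr_symmetric[OF U R regular xt],
      simp add: algebra_simps)

end

theorem mainTheorem1:
  fixes R :: "(real^3) field" and \<psi> :: "2 \<Rightarrow> real field" and U :: "((real^2) \<times> real) set"
  assumes "open U"
    and "smooth_field_on U R"
    and "\<forall>p\<in>U. cross3 (Sv R 1 (fst p) (snd p)) (Sv R 2 (fst p) (snd p)) \<noteq> 0"
    and "\<forall>\<beta>. smooth_field_on U (\<psi> \<beta>)"
    and "(x, t) \<in> U"
  shows "tdM R (\<lambda>\<beta> \<alpha>. covV R \<psi> \<alpha> \<beta>) \<beta> \<alpha> x t - covV R (tdV R \<psi>) \<alpha> \<beta> x t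
       = (\<Sum>\<gamma>\<in>UNIV. Rdot R \<beta> \<alpha> \<gamma> x t * \<psi> \<gamma> x t)
         + Cn R x t * (\<Sum>\<gamma>\<in>UNIV. Bmix R \<gamma> \<alpha> x t * covV R \<psi> \<gamma> \<beta> x t)"
  using tdM_covV_minus_covV_tdV[OF assms(1-3) assms(4)[rule_format] assms(5)] .

end
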